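(* Let $d\in\mathbb{N}$ and $p$ a kernel as in the context. Let $\nu$ be a probability measure on $(\mathbb{R}^d)^{\mathbb{Z}^d}$ such that $r^{-1/2}A(\nu,r)\to0$ as $r\to\infty$, where $A(\nu,r)=\max_{x\in\mathbb{Z}^d:|x|\le r}E^\nu|\eta(x)|$. Then for all $x\in\mathbb{Z}^d$ and $i,j\in\{1,\dots,d\}$, \[\lim_{t\to\infty}E^\nu\bigl|g_t(\eta,x,i)-g_t(\eta,x-e_j,i)\bigr|=0,\qquad\text{where }g_t(\eta,x,i)=\sum_yp^t(x,y)\eta(y-e_i,y).\]
   Context: The kernel $p:\mathbb{Z}^d\to[0,1)$ satisfies $\sum_x p(x)=1$, $p(x)=0$ for $|x|>M$ for some $M<\infty$, and strong aperiodicity: for every $u\in\mathbb{Z}^d$ the smallest additive subgroup of $\mathbb{Z}^d$ containing $\{u+x:p(x)>0\}$ is $\mathbb{Z}^d$; $p(x,y)=p(y-x)$, $p^t$ the $t$-step transition. Configurations $\eta\in(\mathbb{R}^d)^{\mathbb{Z}^d}$ are written $\eta(x)=(\eta(x-e_i,x))_{i=1}^d$, $|\cdot|$ the Euclidean norm, $e_j$ the unit vectors. *)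

theory Defs
  imports "HOL-Probability.Probability"
begin

text \<open>Lattice points of Z^d are int^'d (d = CARD('d)); a configuration is a map
  eta :: int^'d => real^'d with (eta x)$i = eta(x - e_i, x).\<close>

definition lnorm :: "int^'d \<Rightarrow> real" where
  "lnorm x = sqrt (\<Sum>i\<in>UNIV. (real_of_int (x $ i))^2)"

definition unitv :: "'d::finite \<Rightarrow> int^'d" where
  "unitv i = axis i 1"

definition add_subgroup_hull :: "('a::ab_group_add) set \<Rightarrow> 'a set" where
  "add_subgroup_hull S = \<Inter>{G. S \<subseteq> G \<and> 0 \<in> G \<and> (\<forall>a\<in>G. \<forall>b\<in>G. a - b \<in> G)}"

definition kernel :: "(int^'d \<Rightarrow> real) \<Rightarrow> bool" where
  "kernel p \<longleftrightarrow> (\<forall>x. 0 \<le> p x \<and> p x < 1) \<and> (p has_sum 1) UNIV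
     \<and> (\<exists>M. \<forall>x. lnorm x > M \<longrightarrow> p x = 0)
     \<and> (\<forall>u. add_subgroup_hull {u + x | x. p x > 0} = UNIV)"

fun ptrans :: "(int^'d \<Rightarrow> real) \<Rightarrow> nat \<Rightarrow> int^'d \<Rightarrow> int^'d \<Rightarrow> real" where
  "ptrans p 0 x y = (if x = y then 1 else 0)"
| "ptrans p (Suc t) x y = (\<Sum>\<^sub>\<infinity>z. p (z - x) * ptrans p t z y)"

definition gt :: "(int^'d \<Rightarrow> real) \<Rightarrow> nat \<Rightarrow> (int^'d \<Rightarrow> real^'d) \<Rightarrow> int^'d \<Rightarrow> 'd \<Rightarrow> real" where
  "gt p t \<eta> x i = (\<Sum>\<^sub>\<infinity>y. ptrans p t x y * (\<eta> y $ i))"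

definition Anu :: "(int^'d \<Rightarrow> real^'d) measure \<Rightarrow> real \<Rightarrow> ennreal" where
  "Anu \<nu> r = (SUP x\<in>{x. lnorm x \<le> r}. \<integral>\<^sup>+ \<eta>. ennreal (norm (\<eta> x)) \<partial>\<nu>)"

end

theory Submission
  imports Defs
begin

text \<open>Write mu_t for the t-fold convolution power of p, so that
  g_t(eta,x,i) = sum_y mu_t(y - x) eta(y)_i. Since mu_t lives on the ball of radius M t,
  E|g_t(eta,x,i) - g_t(eta,x-h,i)| is at most ||mu_t - mu_t(. - h)||_1 A(nu, |x| + |h| + M t), so it
  suffices that ||mu_t - mu_t(. - h)||_1 = O(t^(-1/2)). The set of such h is a subgroup, so by strong
  aperiodicity it suffices to treat h = b - a with p a, p b > 0. For those, put X = 1/p a on a,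
  X = -1/p b on b and X = 0 elsewhere, so that E[X(Z) f(Z)] = f a - f b for a step Z of the walk.
  By exchangeability of the steps, E[X(Z_1) + ... + X(Z_(t+1)); S_(t+1) = w] equals
  (t+1)(mu_t(w - a) - mu_t(w - b)), and by Cauchy-Schwarz its l^1 norm in w is at most
  (E(X(Z_1) + ... + X(Z_(t+1)))^2)^(1/2) = ((t+1)(X a - X b))^(1/2).\<close>

definition real_of_int_vec :: "int^'d \<Rightarrow> real^'d" where
  "real_of_int_vec x = (\<chi> i. real_of_int (x $ i))"

lemma lnorm_eq_norm: "lnorm x = norm (real_of_int_vec x)"
  unfolding lnorm_def real_of_int_vec_def norm_vec_def L2_set_def by simp

lemma real_of_int_vec_add: "real_of_int_vec (x + y) = real_of_int_vec x + real_of_int_vec y"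
  and real_of_int_vec_diff: "real_of_int_vec (x - y) = real_of_int_vec x - real_of_int_vec y"
  by (auto simp: real_of_int_vec_def vec_eq_iff)

lemma lnorm_nonneg: "0 \<le> lnorm x"
  by (simp add: lnorm_eq_norm)

lemma lnorm_zero [simp]: "lnorm 0 = 0"
  by (simp add: lnorm_def)

lemma lnorm_add_le: "lnorm (x + y) \<le> lnorm x + lnorm y"
  by (simp add: lnorm_eq_norm real_of_int_vec_add norm_triangle_ineq)

lemma lnorm_diff_le: "lnorm (x - y) \<le> lnorm x + lnorm y"
  by (simp add: lnorm_eq_norm real_of_int_vec_diff norm_triangle_ineq4)

lemma abs_component_le_lnorm: "\<bar>real_of_int (x $ i)\<bar> \<le> lnorm x"
  using component_le_norm_cart[of "real_of_int_vec x" i]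
  by (simp add: lnorm_eq_norm real_of_int_vec_def)

lemma finite_lnorm_ball: "finite {x :: int^'d. lnorm x \<le> r}"
proof -
  define K where "K = \<lceil>r\<rceil>"
  have "{x :: int^'d. lnorm x \<le> r} \<subseteq> vec_lambda ` (PiE UNIV (\<lambda>_. {-K..K}))"
  proof
    fix x :: "int^'d" assume "x \<in> {x. lnorm x \<le> r}"
    then have "\<bar>x $ i\<bar> \<le> K" for i
      using abs_component_le_lnorm[of x i] unfolding K_def by simp linarith
    then have "(\<lambda>i. x $ i) \<in> PiE UNIV (\<lambda>_. {-K..K})" by (force simp: abs_le_iff)
    then show "x \<in> vec_lambda ` (PiE UNIV (\<lambda>_. {-K..K}))"
      by (metis image_eqI vec_lambda_eta)
  qed
  moreover have "finite (PiE (UNIV::'d set) (\<lambda>_. {-K..K}))" by (intro finite_PiE) auto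
  ultimately show ?thesis by (meson finite_imageI finite_subset)
qed

lemma infsum_eq_sum_if_outside_zero:
  "finite A \<Longrightarrow> (\<And>x. x \<notin> A \<Longrightarrow> f x = 0) \<Longrightarrow> infsum f UNIV = sum f A"
  by (subst infsum_cong_neutral[of A UNIV f f]) auto

lemma summable_on_if_outside_zero:
  fixes f :: "'a \<Rightarrow> real"
  shows "finite A \<Longrightarrow> (\<And>x. x \<notin> A \<Longrightarrow> f x = 0) \<Longrightarrow> f summable_on UNIV"
  by (subst summable_on_cong_neutral[of A UNIV f f]) auto

lemma infsum_translate: "infsum (\<lambda>w. f (w + h)) UNIV = infsum f (UNIV :: 'a::ab_group_add set)"
proof -
  have "bij_betw (\<lambda>w. w + h) (UNIV :: 'a set) UNIV"
    by (rule bij_betwI[where g="\<lambda>w. w - h"]) auto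
  then show ?thesis by (rule infsum_reindex_bij_betw)
qed

lemma sum_translate:
  fixes f :: "'a::ab_group_add \<Rightarrow> 'b::comm_monoid_add"
  assumes "finite A" "(\<lambda>v. v + z) ` B \<subseteq> A" "\<And>v. v \<notin> B \<Longrightarrow> f v = 0"
  shows "(\<Sum>w\<in>A. f (w - z)) = (\<Sum>v\<in>B. f v)"
proof -
  have "(\<Sum>w\<in>A. f (w - z)) = (\<Sum>w\<in>(\<lambda>v. v + z) ` B. f (w - z))"
  proof (rule sum.mono_neutral_right)
    show "\<forall>w\<in>A - (\<lambda>v. v + z) ` B. f (w - z) = 0"
      using assms(3) by (metis DiffD2 diff_add_cancel imageI)
  qed (use assms in auto)
  also have "\<dots> = (\<Sum>v\<in>B. f v)"
    by (subst sum.reindex) (auto simp: inj_on_def)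
  finally show ?thesis .
qed

lemma weighted_Cauchy_Schwarz:
  fixes q m r u :: "'a \<Rightarrow> real"
  assumes "\<And>z. z \<in> S \<Longrightarrow> 0 \<le> q z \<and> 0 \<le> m z \<and> 0 \<le> r z \<and> (u z)\<^sup>2 \<le> m z * r z"
  shows "(\<Sum>z\<in>S. q z * u z)\<^sup>2 \<le> (\<Sum>z\<in>S. q z * m z) * (\<Sum>z\<in>S. q z * r z)"
proof -
  have le: "\<bar>q z * u z\<bar> \<le> sqrt (q z * m z) * sqrt (q z * r z)" if "z \<in> S" for z
  proof -
    have "\<bar>u z\<bar> \<le> sqrt (m z * r z)" using assms[OF that] by (intro real_le_rsqrt) simp
    moreover have "sqrt (q z * m z) * sqrt (q z * r z) = sqrt ((q z)\<^sup>2 * (m z * r z))"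
      by (simp only: real_sqrt_mult[symmetric]) (simp add: power2_eq_square ac_simps)
    moreover have "sqrt ((q z)\<^sup>2 * (m z * r z)) = q z * sqrt (m z * r z)"
      using assms[OF that] by (simp only: real_sqrt_mult real_sqrt_abs) simp
    ultimately show ?thesis using assms[OF that] by (simp add: abs_mult mult_left_mono)
  qed
  have "\<bar>\<Sum>z\<in>S. q z * u z\<bar> \<le> (\<Sum>z\<in>S. sqrt (q z * m z) * sqrt (q z * r z))"
    by (rule order_trans[OF sum_abs sum_mono]) (use le in auto)
  then have "(\<Sum>z\<in>S. q z * u z)\<^sup>2 \<le> (\<Sum>z\<in>S. sqrt (q z * m z) * sqrt (q z * r z))\<^sup>2"
    by (metis abs_le_square_iff abs_of_nonneg abs_ge_zero order.trans)
  also have "\<dots> \<le> (\<Sum>z\<in>S. (sqrt (q z * m z))\<^sup>2) * (\<Sum>z\<in>S. (sqrt (q z * r z))\<^sup>2)"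
    by (rule Cauchy_Schwarz_ineq_sum)
  also have "\<dots> = (\<Sum>z\<in>S. q z * m z) * (\<Sum>z\<in>S. q z * r z)"
    using assms by (intro arg_cong2[where f="(*)"] sum.cong) auto
  finally show ?thesis .
qed

text \<open>For (mu, nu, rho) = (E 1, E Y, E Y^2) on a fixed event, replacing Y by Y + X keeps
  nu^2 <= mu rho.\<close>
lemma Cauchy_Schwarz_shift:
  fixes \<mu> \<rho> \<nu> X :: real
  assumes "0 \<le> \<mu>" "0 \<le> \<rho>" "\<nu>\<^sup>2 \<le> \<mu> * \<rho>"
  shows "0 \<le> \<rho> + 2 * X * \<nu> + X\<^sup>2 * \<mu>"
    and "(\<nu> + X * \<mu>)\<^sup>2 \<le> \<mu> * (\<rho> + 2 * X * \<nu> + X\<^sup>2 * \<mu>)"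
proof -
  have eq: "\<mu> * (\<rho> + 2 * X * \<nu> + X\<^sup>2 * \<mu>) = (\<nu> + X * \<mu>)\<^sup>2 + (\<mu> * \<rho> - \<nu>\<^sup>2)"
    by (simp add: power2_eq_square algebra_simps)
  then show "(\<nu> + X * \<mu>)\<^sup>2 \<le> \<mu> * (\<rho> + 2 * X * \<nu> + X\<^sup>2 * \<mu>)"
    using assms by simp
  show "0 \<le> \<rho> + 2 * X * \<nu> + X\<^sup>2 * \<mu>"
  proof (cases "\<mu> = 0")
    case True
    then show ?thesis using assms by simp
  next
    case False
    have "0 \<le> \<mu> * (\<rho> + 2 * X * \<nu> + X\<^sup>2 * \<mu>)"
      using eq assms(3) by (simp add: add_nonneg_nonneg)
    then show ?thesis using False assms(1) by (simp add: zero_le_mult_iff)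
  qed
qed

locale finite_range_walk =
  fixes p :: "int^'d \<Rightarrow> real" and M :: real
  assumes p_nonneg: "\<And>x. 0 \<le> p x"
    and p_range: "\<And>z. p z \<noteq> 0 \<Longrightarrow> lnorm z \<le> M"
    and M_pos: "0 < M"
    and p_total: "sum p {z. p z \<noteq> 0} = 1"
begin

abbreviation "steps \<equiv> {z. p z \<noteq> 0}"
abbreviation "lball r \<equiv> {w::int^'d. lnorm w \<le> r}"

lemma finite_steps: "finite steps"
  by (rule finite_subset[OF _ finite_lnorm_ball[of M]]) (use p_range in auto)

fun conv_pow :: "nat \<Rightarrow> int^'d \<Rightarrow> real" where
  "conv_pow 0 w = (if w = 0 then 1 else 0)"
| "conv_pow (Suc n) w = (\<Sum>z\<in>steps. p z * conv_pow n (w - z))"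

lemma conv_support:
  assumes "\<And>z v. z \<in> steps \<Longrightarrow> F z v \<noteq> 0 \<Longrightarrow> lnorm v \<le> r"
    and "(\<Sum>z\<in>steps. p z * F z (w - z)) \<noteq> 0"
  shows "lnorm w \<le> r + M"
proof -
  obtain z where z: "z \<in> steps" "p z * F z (w - z) \<noteq> 0"
    using assms(2) by (meson sum.neutral)
  then have "lnorm (w - z) \<le> r" "lnorm z \<le> M" using assms(1) p_range by auto
  moreover have "lnorm w \<le> lnorm (w - z) + lnorm z" using lnorm_add_le[of "w - z" z] by simp
  ultimately show ?thesis by linarith
qed

lemma sum_lball_conv:
  assumes "\<And>z v. z \<in> steps \<Longrightarrow> F z v \<noteq> 0 \<Longrightarrow> lnorm v \<le> r"
  shows "(\<Sum>w\<in>lball (r + M). \<Sum>z\<in>steps. p z * F z (w - z))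
    = (\<Sum>z\<in>steps. p z * (\<Sum>v\<in>lball r. F z v))"
proof -
  have "(\<Sum>w\<in>lball (r + M). F z (w - z)) = (\<Sum>v\<in>lball r. F z v)" if z: "z \<in> steps" for z
  proof (rule sum_translate)
    show "(\<lambda>v. v + z) ` lball r \<subseteq> lball (r + M)"
      using z p_range lnorm_add_le[of _ z] by (force intro: order_trans)
  qed (use finite_lnorm_ball assms z in auto)
  then show ?thesis
    by (subst sum.swap) (simp add: sum_distrib_left[symmetric])
qed

lemma conv_pow_support: "conv_pow n w \<noteq> 0 \<Longrightarrow> lnorm w \<le> M * n"
proof (induction n arbitrary: w)
  case (Suc n)
  have "lnorm w \<le> M * n + M"
    by (rule conv_support[where F="\<lambda>z. conv_pow n"]) (use Suc in auto)
  then show ?case by (simp add: algebra_simps)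
qed (auto split: if_splits)

lemma conv_pow_nonneg: "0 \<le> conv_pow n w"
  by (induction n arbitrary: w) (auto intro!: sum_nonneg mult_nonneg_nonneg p_nonneg)

lemma conv_pow_total: "(\<Sum>w\<in>lball (M * n). conv_pow n w) = 1"
proof (induction n)
  case 0
  show ?case using sum.delta[OF finite_lnorm_ball[of 0], of "0::int^'d" "\<lambda>_. 1::real"] by simp
next
  case (Suc n)
  have "(\<Sum>w\<in>lball (M * Suc n). conv_pow (Suc n) w)
      = (\<Sum>w\<in>lball (M * n + M). \<Sum>z\<in>steps. p z * conv_pow n (w - z))"
    by (simp add: algebra_simps)
  also have "\<dots> = (\<Sum>z\<in>steps. p z * (\<Sum>v\<in>lball (M * n). conv_pow n v))"
    by (rule sum_lball_conv) (use conv_pow_support in auto)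
  also have "\<dots> = 1" using Suc p_total by simp
  finally show ?case .
qed

lemma conv_pow_far: "M * n + lnorm h < lnorm w \<Longrightarrow> conv_pow n (w - h) = 0"
  using conv_pow_support[of n "w - h"] lnorm_add_le[of "w - h" h] by force

text \<open>With S_n = Z_1 + ... + Z_n the walk with i.i.d. steps of law p and
  Y_n = X(Z_1) + ... + X(Z_n), these are E[Y_n; S_n = w] and E[Y_n^2; S_n = w], computed by
  conditioning on the first step.\<close>
fun moment1 :: "(int^'d \<Rightarrow> real) \<Rightarrow> nat \<Rightarrow> int^'d \<Rightarrow> real" where
  "moment1 X 0 w = 0"
| "moment1 X (Suc n) w = (\<Sum>z\<in>steps. p z * (moment1 X n (w - z) + X z * conv_pow n (w - z)))"

fun moment2 :: "(int^'d \<Rightarrow> real) \<Rightarrow> nat \<Rightarrow> int^'d \<Rightarrow> real" where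
  "moment2 X 0 w = 0"
| "moment2 X (Suc n) w = (\<Sum>z\<in>steps. p z *
     (moment2 X n (w - z) + 2 * X z * moment1 X n (w - z) + (X z)\<^sup>2 * conv_pow n (w - z)))"

lemma moment1_support: "moment1 X n w \<noteq> 0 \<Longrightarrow> lnorm w \<le> M * n"
proof (induction n arbitrary: w)
  case (Suc n)
  have "lnorm w \<le> M * n + M"
    by (rule conv_support[where F="\<lambda>z v. moment1 X n v + X z * conv_pow n v"])
      (use Suc conv_pow_support in force)+
  then show ?case by (simp add: algebra_simps)
qed simp

lemma moment2_support: "moment2 X n w \<noteq> 0 \<Longrightarrow> lnorm w \<le> M * n"
proof (induction n arbitrary: w)
  case (Suc n)
  have "lnorm w \<le> M * n + M"
    by (rule conv_support[where
          F="\<lambda>z v. moment2 X n v + 2 * X z * moment1 X n v + (X z)\<^sup>2 * conv_pow n v"])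
      (use Suc conv_pow_support moment1_support in force)+
  then show ?case by (simp add: algebra_simps)
qed simp

lemma moment_Cauchy_Schwarz: "0 \<le> moment2 X n w \<and> (moment1 X n w)\<^sup>2 \<le> conv_pow n w * moment2 X n w"
proof (induction n arbitrary: w)
  case (Suc n)
  let ?m = "\<lambda>z. conv_pow n (w - z)"
  let ?r = "\<lambda>z. moment2 X n (w - z) + 2 * X z * moment1 X n (w - z) + (X z)\<^sup>2 * conv_pow n (w - z)"
  let ?u = "\<lambda>z. moment1 X n (w - z) + X z * conv_pow n (w - z)"
  have step: "0 \<le> p z \<and> 0 \<le> ?m z \<and> 0 \<le> ?r z \<and> (?u z)\<^sup>2 \<le> ?m z * ?r z" for z
    using Cauchy_Schwarz_shift[OF conv_pow_nonneg[of n "w - z"],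
        of "moment2 X n (w - z)" "moment1 X n (w - z)" "X z"] Suc[of "w - z"] p_nonneg conv_pow_nonneg by auto
  then show ?case
    using weighted_Cauchy_Schwarz[of steps p ?m ?r ?u] by (auto intro!: sum_nonneg)
qed simp

context
  fixes X :: "int^'d \<Rightarrow> real" and a b :: "int^'d"
  assumes expect_X: "\<And>f. (\<Sum>z\<in>steps. p z * X z * f z) = f a - f b"
begin

lemma moment2_total: "(\<Sum>w\<in>lball (M * n). moment2 X n w) = n * (X a - X b)"
proof (induction n)
  case (Suc n)
  define R where "R = (\<Sum>v\<in>lball (M * n). moment2 X n v)"
  define N where "N = (\<Sum>v\<in>lball (M * n). moment1 X n v)"
  have "(\<Sum>w\<in>lball (M * Suc n). moment2 X (Suc n) w) = (\<Sum>w\<in>lball (M * n + M). \<Sum>z\<in>steps.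
      p z * (moment2 X n (w - z) + 2 * X z * moment1 X n (w - z) + (X z)\<^sup>2 * conv_pow n (w - z)))"
    by (simp add: algebra_simps)
  also have "\<dots> = (\<Sum>z\<in>steps. p z * (\<Sum>v\<in>lball (M * n).
      moment2 X n v + 2 * X z * moment1 X n v + (X z)\<^sup>2 * conv_pow n v))"
  proof (rule sum_lball_conv)
    fix z v assume "moment2 X n v + 2 * X z * moment1 X n v + (X z)\<^sup>2 * conv_pow n v \<noteq> 0"
    then have "moment2 X n v \<noteq> 0 \<or> moment1 X n v \<noteq> 0 \<or> conv_pow n v \<noteq> 0" by auto
    then show "lnorm v \<le> M * n" using conv_pow_support moment1_support moment2_support by blast
  qed
  also have "\<dots> = (\<Sum>z\<in>steps. p z * (R + 2 * X z * N + (X z)\<^sup>2))"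
  proof (rule sum.cong[OF refl])
    fix z
    have "(\<Sum>v\<in>lball (M * n). moment2 X n v + 2 * X z * moment1 X n v + (X z)\<^sup>2 * conv_pow n v)
        = R + 2 * X z * N + (X z)\<^sup>2 * (\<Sum>v\<in>lball (M * n). conv_pow n v)"
      by (simp add: R_def N_def sum.distrib sum_distrib_left)
    then show "p z * (\<Sum>v\<in>lball (M * n). moment2 X n v + 2 * X z * moment1 X n v + (X z)\<^sup>2 * conv_pow n v)
        = p z * (R + 2 * X z * N + (X z)\<^sup>2)"
      using conv_pow_total[of n] by simp
  qed
  also have "\<dots> = (\<Sum>z\<in>steps. p z * R) + (\<Sum>z\<in>steps. p z * X z * (2 * N))
      + (\<Sum>z\<in>steps. p z * X z * X z)"
    by (simp add: sum.distrib[symmetric] algebra_simps power2_eq_square)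
  also have "\<dots> = R + (X a - X b)"
    using expect_X[of "\<lambda>_. 2 * N"] expect_X[of X] p_total by (simp add: sum_distrib_right[symmetric])
  finally show ?case using Suc by (simp add: R_def algebra_simps)
qed simp

text \<open>Exchangeability: each of the n + 1 steps contributes E[X(Z_k); S_(n+1) = w].\<close>
lemma moment1_Suc: "moment1 X (Suc n) w = Suc n * (conv_pow n (w - a) - conv_pow n (w - b))"
proof (induction n arbitrary: w)
  case 0
  have "moment1 X (Suc 0) w = (\<Sum>z\<in>steps. p z * X z * conv_pow 0 (w - z))"
    by (simp add: mult.assoc)
  also have "\<dots> = conv_pow 0 (w - a) - conv_pow 0 (w - b)" by (rule expect_X)
  finally show ?case by simp
next
  case (Suc n)
  have shift: "moment1 X (Suc n) (w - z) = Suc n * (conv_pow n (w - a - z) - conv_pow n (w - b - z))"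
    for z using Suc.IH[of "w - z"] by (simp add: algebra_simps del: moment1.simps)
  have "moment1 X (Suc (Suc n)) w
      = (\<Sum>z\<in>steps. p z * moment1 X (Suc n) (w - z)) + (\<Sum>z\<in>steps. p z * X z * conv_pow (Suc n) (w - z))"
    by (simp only: moment1.simps(2)[of X "Suc n"] distrib_left sum.distrib mult.assoc)
  also have "(\<Sum>z\<in>steps. p z * X z * conv_pow (Suc n) (w - z))
      = conv_pow (Suc n) (w - a) - conv_pow (Suc n) (w - b)"
    by (rule expect_X)
  also have "(\<Sum>z\<in>steps. p z * moment1 X (Suc n) (w - z))
      = Suc n * (conv_pow (Suc n) (w - a) - conv_pow (Suc n) (w - b))"
    by (simp only: shift conv_pow.simps)
      (simp add: algebra_simps sum_subtractf sum_distrib_left)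
  finally show ?case by (simp add: algebra_simps)
qed

lemma sum_abs_moment1_le: "(\<Sum>w\<in>lball (M * n). \<bar>moment1 X n w\<bar>) \<le> sqrt (n * (X a - X b))"
proof -
  let ?B = "lball (M * n)"
  have "(\<Sum>w\<in>?B. sqrt (conv_pow n w) * sqrt (moment2 X n w))\<^sup>2
      \<le> (\<Sum>w\<in>?B. (sqrt (conv_pow n w))\<^sup>2) * (\<Sum>w\<in>?B. (sqrt (moment2 X n w))\<^sup>2)"
    by (rule Cauchy_Schwarz_ineq_sum)
  also have "\<dots> = n * (X a - X b)"
    using conv_pow_nonneg moment_Cauchy_Schwarz conv_pow_total moment2_total by simp
  finally have "(\<Sum>w\<in>?B. sqrt (conv_pow n w) * sqrt (moment2 X n w)) \<le> sqrt (n * (X a - X b))"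
    by (rule real_le_rsqrt)
  moreover have "\<bar>moment1 X n w\<bar> \<le> sqrt (conv_pow n w) * sqrt (moment2 X n w)" for w
    using moment_Cauchy_Schwarz[of X n w] conv_pow_nonneg[of n w]
    by (metis real_le_rsqrt power2_abs real_sqrt_mult)
  then have "(\<Sum>w\<in>?B. \<bar>moment1 X n w\<bar>) \<le> (\<Sum>w\<in>?B. sqrt (conv_pow n w) * sqrt (moment2 X n w))"
    by (rule sum_mono)
  ultimately show ?thesis by linarith
qed

lemma sum_abs_conv_pow_diff_le:
  "(\<Sum>w\<in>lball (M * Suc n). \<bar>conv_pow n (w - a) - conv_pow n (w - b)\<bar>) \<le> sqrt (X a - X b) / sqrt (Suc n)"
proof -
  let ?s = "\<Sum>w\<in>lball (M * Suc n). \<bar>conv_pow n (w - a) - conv_pow n (w - b)\<bar>"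
  have "Suc n * ?s = (\<Sum>w\<in>lball (M * Suc n). \<bar>moment1 X (Suc n) w\<bar>)"
    by (simp add: moment1_Suc abs_mult sum_distrib_left del: moment1.simps of_nat_Suc)
  also have "\<dots> \<le> sqrt (Suc n) * sqrt (X a - X b)"
    using sum_abs_moment1_le[of "Suc n"] by (simp add: real_sqrt_mult)
  finally have "sqrt (Suc n) * (sqrt (Suc n) * ?s) \<le> sqrt (Suc n) * sqrt (X a - X b)"
    by (simp add: mult.assoc[symmetric])
  then have "sqrt (Suc n) * ?s \<le> sqrt (X a - X b)"
    by (simp add: mult_le_cancel_left_pos)
  then show ?thesis by (simp add: field_simps)
qed

end

definition pair_weight :: "int^'d \<Rightarrow> int^'d \<Rightarrow> int^'d \<Rightarrow> real" where
  "pair_weight a b z = (if z = a then 1 / p a else if z = b then - 1 / p b else 0)"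

lemma sum_pair_weight:
  assumes "a \<noteq> b" "0 < p a" "0 < p b"
  shows "(\<Sum>z\<in>steps. p z * pair_weight a b z * f z) = f a - f b"
proof -
  have "p z * pair_weight a b z * f z = (if z = a then f a else 0) + (if z = b then - f b else 0)" for z
    using assms by (auto simp: pair_weight_def)
  then show ?thesis
    using assms finite_steps by (simp add: sum.distrib sum.delta)
qed

definition shift_dist :: "int^'d \<Rightarrow> nat \<Rightarrow> real" where
  "shift_dist h n = (\<Sum>\<^sub>\<infinity>w. \<bar>conv_pow n w - conv_pow n (w - h)\<bar>)"

lemma summable_on_abs_conv_pow_diff:
  "(\<lambda>w. \<bar>conv_pow n (w - h1) - conv_pow n (w - h2)\<bar>) summable_on UNIV"
proof (rule summable_on_if_outside_zero[OF finite_lnorm_ball])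
  fix w assume "w \<notin> lball (M * n + lnorm h1 + lnorm h2)"
  then have "M * n + lnorm h1 < lnorm w" "M * n + lnorm h2 < lnorm w"
    using lnorm_nonneg[of h1] lnorm_nonneg[of h2] by auto
  then show "\<bar>conv_pow n (w - h1) - conv_pow n (w - h2)\<bar> = 0" using conv_pow_far by simp
qed

lemma shift_dist_translate: "(\<Sum>\<^sub>\<infinity>w. \<bar>conv_pow n (w - a) - conv_pow n (w - b)\<bar>) = shift_dist (b - a) n"
  using infsum_translate[of "\<lambda>w. \<bar>conv_pow n (w - a) - conv_pow n (w - b)\<bar>" a]
  by (simp add: shift_dist_def algebra_simps)

lemma shift_dist_zero: "shift_dist 0 n = 0"
  by (simp add: shift_dist_def)

lemma shift_dist_uminus: "shift_dist (- h) n = shift_dist h n"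
proof -
  have "shift_dist (- h) n = (\<Sum>\<^sub>\<infinity>w. \<bar>conv_pow n (w - 0) - conv_pow n (w - - h)\<bar>)"
    by (simp only: shift_dist_translate) simp
  also have "\<dots> = (\<Sum>\<^sub>\<infinity>w. \<bar>conv_pow n (w - - h) - conv_pow n (w - 0)\<bar>)"
    by (simp only: abs_minus_commute)
  also have "\<dots> = shift_dist h n"
    by (simp only: shift_dist_translate) simp
  finally show ?thesis .
qed

lemma shift_dist_diff_le: "shift_dist (h1 - h2) n \<le> shift_dist h1 n + shift_dist h2 n"
proof -
  have "shift_dist (h1 - h2) n = (\<Sum>\<^sub>\<infinity>w. \<bar>conv_pow n (w - h2) - conv_pow n (w - h1)\<bar>)"
    by (simp only: shift_dist_translate)
  also have "\<dots> \<le> (\<Sum>\<^sub>\<infinity>w. \<bar>conv_pow n (w - h2) - conv_pow n (w - 0)\<bar>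
      + \<bar>conv_pow n (w - 0) - conv_pow n (w - h1)\<bar>)"
    by (intro infsum_mono summable_on_add summable_on_abs_conv_pow_diff) linarith
  also have "\<dots> = (\<Sum>\<^sub>\<infinity>w. \<bar>conv_pow n (w - h2) - conv_pow n (w - 0)\<bar>)
      + (\<Sum>\<^sub>\<infinity>w. \<bar>conv_pow n (w - 0) - conv_pow n (w - h1)\<bar>)"
    by (intro infsum_add summable_on_abs_conv_pow_diff)
  also have "\<dots> = shift_dist (0 - h2) n + shift_dist (h1 - 0) n"
    by (simp only: shift_dist_translate)
  finally show ?thesis by (simp add: shift_dist_uminus)
qed

lemma shift_dist_step_diff_le:
  assumes "a \<noteq> b" "0 < p a" "0 < p b"
  shows "shift_dist (b - a) n \<le> sqrt (1 / p a + 1 / p b) / sqrt (Suc n)"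
proof -
  have "lnorm a \<le> M" "lnorm b \<le> M" using assms p_range by auto
  then have "shift_dist (b - a) n = (\<Sum>w\<in>lball (M * Suc n). \<bar>conv_pow n (w - a) - conv_pow n (w - b)\<bar>)"
    unfolding shift_dist_translate[symmetric]
  proof (intro infsum_eq_sum_if_outside_zero finite_lnorm_ball)
    fix w assume "w \<notin> lball (M * Suc n)"
    then have "M * n + lnorm a < lnorm w" "M * n + lnorm b < lnorm w"
      using \<open>lnorm a \<le> M\<close> \<open>lnorm b \<le> M\<close> by (auto simp: algebra_simps)
    then show "\<bar>conv_pow n (w - a) - conv_pow n (w - b)\<bar> = 0" using conv_pow_far by simp
  qed
  also have "\<dots> \<le> sqrt (pair_weight a b a - pair_weight a b b) / sqrt (Suc n)"
    by (rule sum_abs_conv_pow_diff_le) (rule sum_pair_weight[OF assms])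
  finally show ?thesis using assms by (simp add: pair_weight_def)
qed

lemma shift_dist_decay:
  assumes aperiodic: "\<forall>u. add_subgroup_hull {u + x | x. p x > 0} = UNIV"
  shows "\<exists>C. \<forall>n. shift_dist h n \<le> C / sqrt (Suc n)"
proof -
  obtain a where "p a \<noteq> 0"
    using p_total by (metis (mono_tags, lifting) mem_Collect_eq sum.neutral zero_neq_one)
  then have pa: "0 < p a" using p_nonneg[of a] by linarith
  define G where "G = {h. \<exists>C. \<forall>n. shift_dist h n \<le> C / sqrt (Suc n)}"
  have "x - a \<in> G" if "p x > 0" for x
    using shift_dist_step_diff_le[OF _ pa that] shift_dist_zero unfolding G_def
    by (cases "x = a") (auto intro: exI[of _ 0])
  then have "{- a + x | x. p x > 0} \<subseteq> G" by auto
  moreover have "0 \<in> G" unfolding G_def using shift_dist_zero by (auto intro: exI[of _ 0])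
  moreover have "h1 - h2 \<in> G" if h1: "h1 \<in> G" and h2: "h2 \<in> G" for h1 h2
  proof -
    obtain C1 where C1: "\<And>n. shift_dist h1 n \<le> C1 / sqrt (Suc n)" using h1 unfolding G_def by auto
    obtain C2 where C2: "\<And>n. shift_dist h2 n \<le> C2 / sqrt (Suc n)" using h2 unfolding G_def by auto
    have "shift_dist (h1 - h2) n \<le> (C1 + C2) / sqrt (Suc n)" for n
      unfolding add_divide_distrib by (rule order_trans[OF shift_dist_diff_le add_mono[OF C1 C2]])
    then show ?thesis unfolding G_def by auto
  qed
  ultimately have "add_subgroup_hull {- a + x | x. p x > 0} \<subseteq> G"
    unfolding add_subgroup_hull_def by (intro Inter_lower) auto
  then show ?thesis using aperiodic[rule_format, of "- a"] unfolding G_def by auto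
qed

lemma ptrans_eq_conv_pow: "ptrans p t x y = conv_pow t (y - x)"
proof (induction t arbitrary: x y)
  case (Suc t)
  have "ptrans p (Suc t) x y = (\<Sum>\<^sub>\<infinity>z. p (z - x) * conv_pow t (y - z))"
    by (simp add: Suc)
  also have "\<dots> = (\<Sum>\<^sub>\<infinity>v. p v * conv_pow t (y - x - v))"
    using infsum_translate[of "\<lambda>z. p (z - x) * conv_pow t (y - z)" x] by (simp add: algebra_simps)
  also have "\<dots> = (\<Sum>v\<in>steps. p v * conv_pow t (y - x - v))"
    by (rule infsum_eq_sum_if_outside_zero[OF finite_steps]) (simp add: algebra_simps)
  finally show ?case by simp
qed simp

lemma gt_eq_sum_lball:
  assumes "M * t + lnorm x \<le> R"
  shows "gt p t \<eta> x i = (\<Sum>y\<in>lball R. conv_pow t (y - x) * (\<eta> y $ i))"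
  unfolding gt_def ptrans_eq_conv_pow
proof (rule infsum_eq_sum_if_outside_zero[OF finite_lnorm_ball])
  fix y assume "y \<notin> lball R"
  then have "M * t + lnorm x < lnorm y" using assms by simp
  then show "conv_pow t (y - x) * (\<eta> y $ i) = 0" by (simp add: conv_pow_far)
qed

lemma abs_gt_diff_le:
  assumes "M * t + lnorm x + lnorm h \<le> R"
  shows "\<bar>gt p t \<eta> x i - gt p t \<eta> (x - h) i\<bar>
    \<le> (\<Sum>y\<in>lball R. \<bar>conv_pow t (y - x) - conv_pow t (y - (x - h))\<bar> * norm (\<eta> y))"
proof -
  have "M * t + lnorm x \<le> R" "M * t + lnorm (x - h) \<le> R"
    using assms lnorm_nonneg[of h] lnorm_diff_le[of x h] by linarith+
  then have "\<bar>gt p t \<eta> x i - gt p t \<eta> (x - h) i\<bar>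
      = \<bar>\<Sum>y\<in>lball R. (conv_pow t (y - x) - conv_pow t (y - (x - h))) * (\<eta> y $ i)\<bar>"
    by (simp add: gt_eq_sum_lball sum_subtractf left_diff_distrib)
  also have "\<dots> \<le> (\<Sum>y\<in>lball R. \<bar>(conv_pow t (y - x) - conv_pow t (y - (x - h))) * (\<eta> y $ i)\<bar>)"
    by (rule sum_abs)
  also have "\<dots> \<le> (\<Sum>y\<in>lball R. \<bar>conv_pow t (y - x) - conv_pow t (y - (x - h))\<bar> * norm (\<eta> y))"
    by (intro sum_mono)
      (simp add: abs_mult mult_left_mono component_le_norm_cart[of "\<eta> _" i, unfolded real_norm_def])
  finally show ?thesis .
qed

lemma nn_integral_abs_gt_diff_le:
  assumes "sets \<nu> = sets (Pi\<^sub>M UNIV (\<lambda>_. (borel :: (real^'d) measure)))"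
  shows "(\<integral>\<^sup>+ \<eta>. ennreal \<bar>gt p t \<eta> x i - gt p t \<eta> (x - h) i\<bar> \<partial>\<nu>)
    \<le> ennreal (shift_dist h t) * Anu \<nu> (M * t + lnorm x + lnorm h)"
proof -
  define R where "R = M * t + lnorm x + lnorm h"
  define f where "f y = \<bar>conv_pow t (y - x) - conv_pow t (y - (x - h))\<bar>" for y
  have "(\<lambda>\<eta>. \<eta> y) \<in> measurable \<nu> (borel :: (real^'d) measure)" for y
    unfolding measurable_cong_sets[OF assms refl] by (rule measurable_component_singleton) simp
  then have meas: "(\<lambda>\<eta>. ennreal (norm (\<eta> y))) \<in> borel_measurable \<nu>" for y
    by measurable
  have "(\<integral>\<^sup>+ \<eta>. ennreal \<bar>gt p t \<eta> x i - gt p t \<eta> (x - h) i\<bar> \<partial>\<nu>)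
      \<le> (\<integral>\<^sup>+ \<eta>. (\<Sum>y\<in>lball R. ennreal (f y) * ennreal (norm (\<eta> y))) \<partial>\<nu>)"
  proof (rule nn_integral_mono)
    fix \<eta> :: "int^'d \<Rightarrow> real^'d"
    have "\<bar>gt p t \<eta> x i - gt p t \<eta> (x - h) i\<bar> \<le> (\<Sum>y\<in>lball R. f y * norm (\<eta> y))"
      unfolding f_def by (rule abs_gt_diff_le) (simp add: R_def)
    then show "ennreal \<bar>gt p t \<eta> x i - gt p t \<eta> (x - h) i\<bar>
        \<le> (\<Sum>y\<in>lball R. ennreal (f y) * ennreal (norm (\<eta> y)))"
      by (simp add: ennreal_leI f_def sum_ennreal flip: ennreal_mult)
  qed
  also have "\<dots> = (\<Sum>y\<in>lball R. ennreal (f y) * (\<integral>\<^sup>+ \<eta>. ennreal (norm (\<eta> y)) \<partial>\<nu>))"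
    using meas by (simp add: nn_integral_sum nn_integral_cmult)
  also have "\<dots> \<le> (\<Sum>y\<in>lball R. ennreal (f y) * Anu \<nu> R)"
    unfolding Anu_def by (intro sum_mono mult_left_mono SUP_upper) auto
  also have "\<dots> = ennreal (\<Sum>y\<in>lball R. f y) * Anu \<nu> R"
    by (simp add: f_def sum_ennreal flip: sum_distrib_right)
  also have "(\<Sum>y\<in>lball R. f y) = shift_dist h t"
  proof -
    have "(\<Sum>y\<in>lball R. f y) = (\<Sum>\<^sub>\<infinity>y. f y)"
    proof (rule infsum_eq_sum_if_outside_zero[OF finite_lnorm_ball, symmetric])
      fix y assume "y \<notin> lball R"
      then have "M * t + lnorm x < lnorm y" "M * t + lnorm (x - h) < lnorm y"
        using lnorm_nonneg[of h] lnorm_diff_le[of x h] by (auto simp: R_def)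
      then show "f y = 0" using conv_pow_far by (simp add: f_def)
    qed
    also have "\<dots> = shift_dist (x - (x - h)) t"
      unfolding f_def by (subst abs_minus_commute) (rule shift_dist_translate)
    finally show ?thesis by simp
  qed
  finally show ?thesis by (simp add: R_def)
qed

end

lemma tendsto_zero_if_sqrt_decay_bound:
  fixes f :: "nat \<Rightarrow> ennreal" and A :: "real \<Rightarrow> ennreal" and M K C :: real
  assumes "0 < M" "0 \<le> K"
    and bound: "\<And>t. f t \<le> ennreal (C / sqrt (Suc t)) * A (M * real t + K)"
    and A_growth: "((\<lambda>r. A r / ennreal (sqrt r)) \<longlongrightarrow> 0) at_top"
  shows "(f \<longlongrightarrow> 0) at_top"
proof -
  define R where "R t = M * t + K" for t :: nat
  define B where "B = max C 0 * sqrt (M + K)"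
  have "filterlim (\<lambda>t. K + M * real t) at_top sequentially"
    by (intro filterlim_tendsto_add_at_top[OF tendsto_const]
        filterlim_tendsto_pos_mult_at_top[OF tendsto_const] filterlim_real_sequentially) (use assms(1) in auto)
  moreover have "R = (\<lambda>t. K + M * real t)"
    by (simp add: R_def fun_eq_iff add.commute)
  ultimately have "filterlim R at_top sequentially"
    by simp
  then have lim: "((\<lambda>t. ennreal B * (A (R t) / ennreal (sqrt (R t)))) \<longlongrightarrow> 0) sequentially"
    using ennreal_tendsto_cmult[OF _ filterlim_compose[OF A_growth], of "ennreal B"] by (simp add: o_def)
  have "f t \<le> ennreal B * (A (R t) / ennreal (sqrt (R t)))" if "1 \<le> t" for t
  proof -
    have R_pos: "0 < R t" using that assms(1,2) by (simp add: R_def add_pos_nonneg)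
    have "R t \<le> (M + K) * Suc t" using assms(1,2) by (simp add: R_def algebra_simps)
    then have "sqrt (R t) \<le> sqrt (M + K) * sqrt (Suc t)"
      by (simp flip: real_sqrt_mult)
    then have "max C 0 * sqrt (R t) \<le> max C 0 * (sqrt (M + K) * sqrt (Suc t))"
      by (simp add: mult_left_mono)
    moreover have "C * sqrt (R t) \<le> max C 0 * sqrt (R t)"
      using R_pos by (intro mult_right_mono) simp_all
    ultimately have "C * sqrt (R t) \<le> max C 0 * (sqrt (M + K) * sqrt (Suc t))"
      by (rule order_trans[rotated])
    then have "C / sqrt (Suc t) \<le> B / sqrt (R t)"
      using R_pos by (simp add: B_def field_simps)
    then have "f t \<le> ennreal (B / sqrt (R t)) * A (R t)"
      using bound[of t] by (simp add: R_def mult_right_mono ennreal_leI order_trans)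
    also have "\<dots> = ennreal B * (A (R t) / ennreal (sqrt (R t)))"
    proof -
      have "0 \<le> B" using assms(1,2) by (simp add: B_def)
      then have "ennreal (B / sqrt (R t)) = ennreal B * inverse (ennreal (sqrt (R t)))"
        using R_pos by (simp add: divide_real_def ennreal_mult inverse_ennreal)
      then show ?thesis by (simp add: divide_ennreal_def mult_ac)
    qed
    finally show ?thesis .
  qed
  then have upper: "eventually (\<lambda>t. f t \<le> ennreal B * (A (R t) / ennreal (sqrt (R t)))) sequentially"
    by (rule eventually_sequentiallyI)
  show ?thesis
    by (rule tendsto_sandwich[OF _ upper tendsto_const lim]) simp
qed

lemma kernel_finite_range_walk:
  assumes "kernel p"
  obtains M where "finite_range_walk p M"
proof -
  have nonneg: "\<forall>x. 0 \<le> p x" and total: "(p has_sum 1) UNIV"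
    using assms unfolding kernel_def by auto
  obtain M0 where M0: "\<forall>x. lnorm x > M0 \<longrightarrow> p x = 0" using assms unfolding kernel_def by auto
  define M where "M = \<bar>M0\<bar> + 1"
  have range: "p z \<noteq> 0 \<Longrightarrow> lnorm z \<le> M" for z using M0 unfolding M_def by force
  have finite: "finite {z. p z \<noteq> 0}"
    by (rule finite_subset[OF _ finite_lnorm_ball[of M]]) (use range in auto)
  have "1 = (\<Sum>\<^sub>\<infinity>z. p z)" using total by (simp add: infsumI)
  also have "\<dots> = sum p {z. p z \<noteq> 0}" by (rule infsum_eq_sum_if_outside_zero[OF finite]) auto
  finally have "finite_range_walk p M"
    using nonneg range by unfold_locales (auto simp: M_def)
  then show ?thesis by (rule that)
qed

theorem lemma4p2:
  fixes p :: "int^'d \<Rightarrow> real"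
    and \<nu> :: "(int^'d \<Rightarrow> real^'d) measure"
  assumes "kernel p"
    and "prob_space \<nu>"
    and "sets \<nu> = sets (Pi\<^sub>M UNIV (\<lambda>_. (borel :: (real^'d) measure)))"
    and "((\<lambda>r. Anu \<nu> r / ennreal (sqrt r)) \<longlongrightarrow> 0) at_top"
  shows "\<forall>x i j. ((\<lambda>t. \<integral>\<^sup>+ \<eta>. ennreal \<bar>gt p t \<eta> x i - gt p t \<eta> (x - unitv j) i\<bar> \<partial>\<nu>)
            \<longlongrightarrow> 0) at_top"
proof (intro allI)
  fix x :: "int^'d" and i j :: 'd
  obtain M where "finite_range_walk p M" using assms(1) by (rule kernel_finite_range_walk)
  then interpret finite_range_walk p M .
  obtain C where "\<And>t. shift_dist (unitv j) t \<le> C / sqrt (Suc t)"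
    using shift_dist_decay assms(1) unfolding kernel_def by blast
  then have bound: "(\<integral>\<^sup>+ \<eta>. ennreal \<bar>gt p t \<eta> x i - gt p t \<eta> (x - unitv j) i\<bar> \<partial>\<nu>)
      \<le> ennreal (C / sqrt (Suc t)) * Anu \<nu> (M * t + (lnorm x + lnorm (unitv j)))" for t
    using nn_integral_abs_gt_diff_le[OF assms(3), of t x i "unitv j"]
    by (simp add: add.assoc) (meson ennreal_leI mult_right_mono order_trans zero_le)
  show "((\<lambda>t. \<integral>\<^sup>+ \<eta>. ennreal \<bar>gt p t \<eta> x i - gt p t \<eta> (x - unitv j) i\<bar> \<partial>\<nu>) \<longlongrightarrow> 0) at_top"
    by (intro tendsto_zero_if_sqrt_decay_bound[where A = "Anu \<nu>" and M = M
          and K = "lnorm x + lnorm (unitv j)" and C = C] M_pos add_nonneg_nonneg lnorm_nonneg bound assms(4))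
qed

end
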